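(* Suppose $F$ is symmetric ($F(-i)=1-F(i)$ for all $i$). Fix $R\in(0,1)$, let $\beta=F(1/2-R)$, fix $\sigma>0$, and regard the value $V$ of the recommendation system as a function of $Q\in(0,1/2)$, where $q_H=\frac{(1-2Q)\sigma}{1+\sigma}$, $q_L=\frac{1-2Q}{1+\sigma}$ and $q_1+q_2=2Q$ (with $q_1,q_2>0$). Then: (i) if $3\sigma-\beta-\sigma^2+\sigma^2\beta>0$, the value is decreasing in $Q$; in particular this is the case when $\sigma=1$; (ii) if $3\sigma-\beta-\sigma^2+\sigma^2\beta<0$, then $Q^*=\frac{3\sigma-\beta-\sigma^2+\sigma^2\beta}{4\sigma-4\beta-4\sigma^2+4\sigma^2\beta}$ lies in $(0,1/2)$ and maximizes the value over $Q\in(0,1/2)$.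
   Context: Setting. Consumer types are $i\in[-1/2,1/2]$, distributed according to a continuous cumulative distribution function $F$ with full support on $[-1/2,1/2]$. A product has a quality vector $(Q_1,Q_2)\in\{0,1\}^2$; a type-$i$ consumer gets payoff $(1/2+i)Q_1+(1/2-i)Q_2$ from it. The versions $(1,1),(1,0),(0,1),(0,0)$ have prior probabilities $q_H,q_1,q_2,q_L$, all strictly positive and summing to $1$. Given a threshold $R\in(0,1)$, a sender with type drawn from $F$ independently of the product gives a buy recommendation $B$ if her payoff is at least $R$ and a don't-buy recommendation $D$ otherwise. Let $\phi_1(R)=1-F(R-1/2)$, $\phi_2(R)=F(1/2-R)$, $\pi^B=q_H+q_1\phi_1(R)+q_2\phi_2(R)$, $\pi^D=1-\pi^B$. Posteriors: $p^B_H=q_H/\pi^B$, $p^B_1=q_1\phi_1(R)/\pi^B$, $p^B_2=q_2\phi_2(R)/\pi^B$; $p^D_H=0$, $p^D_1=q_1(1-\phi_1(R))/\pi^D$, $p^D_2=q_2(1-\phi_2(R))/\pi^D$. Let $U_i^r=p_H^r+(1/2+i)p_1^r+(1/2-i)p_2^r$ for $r\in\{B,D\}$ and $U_i^0=q_H+(1/2+i)q_1+(1/2-i)q_2$. The value of the recommendation system is $V=\pi^B\int_{-1/2}^{1/2}\max\{U_i^B-U_i^0,0\}\,dF(i)+\pi^D\int_{-1/2}^{1/2}\max\{U_i^D-U_i^0,0\}\,dF(i)$. Under symmetry this depends on the primitives only through $Q=(q_1+q_2)/2$, $\sigma=q_H/q_L$ and $\beta$. *)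

theory Defs
  imports "HOL-Analysis.Analysis"
begin

text \<open>Integration against dF over [-1/2,1/2]: Lebesgue-Stieltjes integral w.r.t.
  the measure interval_measure F induced by the CDF F.\<close>

definition intF :: "(real \<Rightarrow> real) \<Rightarrow> (real \<Rightarrow> real) \<Rightarrow> real" where
  "intF F g = (LINT i:{-1/2..1/2::real}|interval_measure F. g i)"

definition phi1 :: "(real \<Rightarrow> real) \<Rightarrow> real \<Rightarrow> real" where
  "phi1 F R = 1 - F (R - 1/2)"

definition phi2 :: "(real \<Rightarrow> real) \<Rightarrow> real \<Rightarrow> real" where
  "phi2 F R = F (1/2 - R)"

definition piB :: "(real \<Rightarrow> real) \<Rightarrow> real \<Rightarrow> real \<Rightarrow> real \<Rightarrow> real \<Rightarrow> real" where
  "piB F R qH q1 q2 = qH + q1 * phi1 F R + q2 * phi2 F R"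

definition piD :: "(real \<Rightarrow> real) \<Rightarrow> real \<Rightarrow> real \<Rightarrow> real \<Rightarrow> real \<Rightarrow> real" where
  "piD F R qH q1 q2 = 1 - piB F R qH q1 q2"

text \<open>Expected payoffs of type i after recommendation B, after D, and without recommendation.\<close>

definition UB :: "(real \<Rightarrow> real) \<Rightarrow> real \<Rightarrow> real \<Rightarrow> real \<Rightarrow> real \<Rightarrow> real \<Rightarrow> real" where
  "UB F R qH q1 q2 i =
     (let pB = piB F R qH q1 q2;
          pH = qH / pB; p1 = q1 * phi1 F R / pB; p2 = q2 * phi2 F R / pB
      in pH + (1/2 + i) * p1 + (1/2 - i) * p2)"

definition UD :: "(real \<Rightarrow> real) \<Rightarrow> real \<Rightarrow> real \<Rightarrow> real \<Rightarrow> real \<Rightarrow> real \<Rightarrow> real" where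
  "UD F R qH q1 q2 i =
     (let pD = piD F R qH q1 q2;
          pH = 0; p1 = q1 * (1 - phi1 F R) / pD; p2 = q2 * (1 - phi2 F R) / pD
      in pH + (1/2 + i) * p1 + (1/2 - i) * p2)"

definition U0 :: "real \<Rightarrow> real \<Rightarrow> real \<Rightarrow> real \<Rightarrow> real" where
  "U0 qH q1 q2 i = qH + (1/2 + i) * q1 + (1/2 - i) * q2"

definition rec_value :: "(real \<Rightarrow> real) \<Rightarrow> real \<Rightarrow> real \<Rightarrow> real \<Rightarrow> real \<Rightarrow> real" where
  "rec_value F R qH q1 q2 =
     piB F R qH q1 q2 * intF F (\<lambda>i. max (UB F R qH q1 q2 i - U0 qH q1 q2 i) 0)
   + piD F R qH q1 q2 * intF F (\<lambda>i. max (UD F R qH q1 q2 i - U0 qH q1 q2 i) 0)"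

definition type_cdf :: "(real \<Rightarrow> real) \<Rightarrow> bool" where
  "type_cdf F \<longleftrightarrow> mono F \<and> continuous_on UNIV F \<and>
     (\<forall>x\<le>-1/2. F x = 0) \<and> (\<forall>x\<ge>1/2. F x = 1) \<and> strict_mono_on {-1/2..1/2} F"

definition admissible :: "real \<Rightarrow> real \<Rightarrow> real \<Rightarrow> real \<Rightarrow> real \<Rightarrow> bool" where
  "admissible \<sigma> Q qH q1 q2 \<longleftrightarrow> 0 < Q \<and> Q < 1/2 \<and>
     qH = (1 - 2*Q) * \<sigma> / (1 + \<sigma>) \<and> q1 > 0 \<and> q2 > 0 \<and> q1 + q2 = 2*Q"

end

theory Submission
  imports Defs "HOL-Probability.Distribution_Functions"
begin

text \<open>Symmetry of \<open>F\<close> gives \<open>\<phi>\<^sub>1(R) = \<phi>\<^sub>2(R) = \<beta>\<close>, so a buy recommendation raises and a don't-buy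
  recommendation lowers the expected payoff of every type: only the B-term of the value survives,
  and there the gain is affine in the type \<open>i\<close>. A symmetric \<open>F\<close> integrates \<open>i\<close> to zero, so the value
  is \<open>q\<^sub>H(1 - \<pi>\<^sup>B) + Q(\<beta> - \<pi>\<^sup>B)\<close> with \<open>\<pi>\<^sup>B = q\<^sub>H + 2Q\<beta>\<close>.
  In the parametrisation this is the parabola \<open>(\<sigma> - K Q + 2 D Q\<^sup>2) / (1 + \<sigma>)\<^sup>2\<close> with
  \<open>K = 3\<sigma> - \<beta> - \<sigma>\<^sup>2 + \<sigma>\<^sup>2\<beta>\<close> and \<open>D = (1 - \<sigma>)(\<sigma> - \<beta>(1 + \<sigma>))\<close>. Its slope \<open>2D - K\<close> at \<open>Q = 1/2\<close>
  is always negative, so for \<open>K > 0\<close> it decreases on \<open>(0, 1/2)\<close>, while for \<open>K < 0\<close> it is concave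
  with vertex \<open>K / (4D) \<in> (0, 1/2)\<close>.\<close>

lemma type_cdfD:
  assumes "type_cdf F"
  shows "\<And>x y. x \<le> y \<Longrightarrow> F x \<le> F y"
    and "continuous_on UNIV F"
    and "\<And>a. continuous (at_right a) F"
    and "(F \<longlongrightarrow> 0) at_bot"
    and "(F \<longlongrightarrow> 1) at_top"
proof -
  show "F x \<le> F y" if "x \<le> y" for x y
    using assms that by (simp add: type_cdf_def mono_def)
  show cont: "continuous_on UNIV F"
    using assms by (simp add: type_cdf_def)
  show "continuous (at_right a) F" for a
    using cont by (simp add: continuous_on_eq_continuous_at continuous_at_imp_continuous_within)
  show "(F \<longlongrightarrow> 0) at_bot"
    using assms unfolding type_cdf_def
    by (intro tendsto_eventually) (auto simp: eventually_at_bot_linorder intro: exI[of _ "-1/2"])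
  show "(F \<longlongrightarrow> 1) at_top"
    using assms unfolding type_cdf_def
    by (intro tendsto_eventually) (auto simp: eventually_at_top_linorder intro: exI[of _ "1/2"])
qed

lemma type_cdf_real_distribution: "type_cdf F \<Longrightarrow> real_distribution (interval_measure F)"
  by (rule real_distribution_interval_measure) (use type_cdfD in auto)

lemma type_cdf_cdf_interval_measure: "type_cdf F \<Longrightarrow> cdf (interval_measure F) = F"
  by (rule cdf_interval_measure) (use type_cdfD in auto)

lemma type_cdf_measure_type_interval:
  assumes "type_cdf F"
  shows "measure (interval_measure F) {-1/2..1/2} = 1"
proof -
  have "emeasure (interval_measure F) {-1/2..1/2} = F (1/2) - F (-1/2)"
    by (rule emeasure_interval_measure_Icc) (use type_cdfD[OF assms] in auto)
  also have "F (1/2) - F (-1/2) = 1"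
    using assms by (simp add: type_cdf_def)
  finally show ?thesis
    by (simp add: measure_def)
qed

lemma distr_uminus_interval_measure:
  assumes cdf: "type_cdf F" and sym: "\<forall>i. F (-i) = 1 - F i"
  shows "distr (interval_measure F) borel uminus = interval_measure F"
proof (rule cdf_unique)
  let ?M = "interval_measure F"
  interpret real_distribution ?M
    using cdf by (rule type_cdf_real_distribution)
  have cdf_M: "cdf ?M = F"
    using cdf by (rule type_cdf_cdf_interval_measure)
  have atom: "measure ?M {a} = 0" for a
    using type_cdfD(2)[OF cdf] by (simp add: isCont_cdf[symmetric] cdf_M continuous_on_eq_continuous_at)
  have Iio: "measure ?M {..<a} = F a" for a
  proof -
    have "{..<a} = {..a} - {a}"
      by auto
    then show ?thesis
      using atom finite_measure_Diff[of "{..a}" "{a}"] by (simp add: cdf_def2[symmetric] cdf_M)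
  qed
  show "real_distribution ?M" ..
  show "real_distribution (distr ?M borel uminus)"
    by simp
  show "cdf (distr ?M borel uminus) = cdf ?M"
  proof
    fix x :: real
    have "cdf (distr ?M borel uminus) x = measure ?M (uminus -` {..x} \<inter> space ?M)"
      by (simp add: cdf_def2 measure_distr)
    also have "uminus -` {..x} \<inter> space ?M = space ?M - {..<-x}"
      by auto
    also have "measure ?M (space ?M - {..<-x}) = F x"
      using Iio[of "-x"] sym prob_compl[of "{..<-x}"] by simp
    finally show "cdf (distr ?M borel uminus) x = cdf ?M x"
      by (simp add: cdf_M)
  qed
qed

lemma intF_cong:
  assumes "\<And>i. -1/2 \<le> i \<Longrightarrow> i \<le> 1/2 \<Longrightarrow> g i = h i"
  shows "intF F g = intF F h"
  unfolding intF_def by (rule set_lebesgue_integral_cong) (use assms in auto)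

lemma intF_affine:
  assumes cdf: "type_cdf F" and sym: "\<forall>i. F (-i) = 1 - F i"
  shows "intF F (\<lambda>i. c\<^sub>0 + c\<^sub>1 * i) = c\<^sub>0"
proof -
  let ?M = "interval_measure F"
  let ?S = "{-1/2..1/2::real}"
  let ?g = "\<lambda>x::real. indicator ?S x * x"
  interpret real_distribution ?M
    using cdf by (rule type_cdf_real_distribution)
  have "integral\<^sup>L ?M ?g = integral\<^sup>L (distr ?M borel uminus) ?g"
    using distr_uminus_interval_measure[OF cdf sym] by simp
  also have "\<dots> = integral\<^sup>L ?M (\<lambda>x. ?g (- x))"
    by (rule integral_distr) auto
  also have "(\<lambda>x. ?g (- x)) = (\<lambda>x. - ?g x)"
    by (auto simp: indicator_def fun_eq_iff)
  also have "integral\<^sup>L ?M (\<lambda>x. - ?g x) = - integral\<^sup>L ?M ?g"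
    by (rule integral_minus)
  finally have "integral\<^sup>L ?M ?g = - integral\<^sup>L ?M ?g" .
  then have odd: "integral\<^sup>L ?M ?g = 0"
    by linarith
  have "integrable ?M ?g"
    by (rule integrable_const_bound[where B=1]) (auto simp: indicator_def)
  moreover have "integrable ?M (\<lambda>x. indicator ?S x :: real)"
    by (rule integrable_real_indicator) (auto simp: emeasure_eq_measure)
  moreover have "intF F (\<lambda>i. c\<^sub>0 + c\<^sub>1 * i) = integral\<^sup>L ?M (\<lambda>x. c\<^sub>0 * indicator ?S x + c\<^sub>1 * ?g x)"
    unfolding intF_def set_lebesgue_integral_def
    by (rule Bochner_Integration.integral_cong) (auto simp: algebra_simps)
  ultimately have "intF F (\<lambda>i. c\<^sub>0 + c\<^sub>1 * i)
                     = c\<^sub>0 * integral\<^sup>L ?M (\<lambda>x. indicator ?S x) + c\<^sub>1 * integral\<^sup>L ?M ?g"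
    by simp
  also have "\<dots> = c\<^sub>0"
    using odd type_cdf_measure_type_interval[OF cdf] by simp
  finally show ?thesis .
qed

lemma phi1_eq_phi2: "\<forall>i. F (-i) = 1 - F i \<Longrightarrow> phi1 F R = phi2 F R"
  by (drule spec[of _ "R - 1/2"]) (simp add: phi1_def phi2_def)

lemma phi2_bounds:
  assumes cdf: "type_cdf F" and R: "0 < R" "R < 1"
  shows "0 < phi2 F R" "phi2 F R < 1"
proof -
  have smo: "strict_mono_on {-1/2..1/2} F"
    using cdf by (simp add: type_cdf_def)
  have "F (-1/2) < F (1/2 - R)"
    by (rule strict_mono_onD[OF smo]) (use R in auto)
  moreover have "F (1/2 - R) < F (1/2)"
    by (rule strict_mono_onD[OF smo]) (use R in auto)
  moreover have "F (-1/2) = 0" "F (1/2) = 1"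
    using cdf by (simp_all add: type_cdf_def)
  ultimately show "0 < phi2 F R" "phi2 F R < 1"
    by (simp_all add: phi2_def)
qed

lemma UB_sub_U0:
  fixes qH q1 q2 b :: real
  assumes phi: "phi1 F R = b" "phi2 F R = b"
  defines "P \<equiv> qH + (q1 + q2) * b"
  assumes P: "P \<noteq> 0"
  shows "UB F R qH q1 q2 i - U0 qH q1 q2 i
           = (qH * (1 - P) + ((1/2 + i) * q1 + (1/2 - i) * q2) * (b - P)) / P"
proof -
  have "piB F R qH q1 q2 = P"
    by (simp add: piB_def phi P_def algebra_simps)
  then show ?thesis
    unfolding UB_def U0_def Let_def using phi P by (simp add: field_simps)
qed

lemma UD_sub_U0:
  fixes qH q1 q2 b :: real
  assumes phi: "phi1 F R = b" "phi2 F R = b"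
  defines "P \<equiv> qH + (q1 + q2) * b"
  assumes P: "P \<noteq> 1"
  shows "UD F R qH q1 q2 i - U0 qH q1 q2 i
           = - (qH * (1 - P) + ((1/2 + i) * q1 + (1/2 - i) * q2) * (b - P)) / (1 - P)"
proof -
  have "piD F R qH q1 q2 = 1 - P"
    by (simp add: piD_def piB_def phi P_def algebra_simps)
  then show ?thesis
    unfolding UD_def U0_def Let_def using phi P by (simp add: divide_simps) (simp add: algebra_simps)
qed

lemma gain_after_buy_nonneg:
  fixes qH q1 q2 b w :: real
  assumes q: "0 \<le> qH" "0 < q1 + q2" "qH + q1 + q2 \<le> 1"
    and b: "0 \<le> b" "b \<le> 1" and w: "0 \<le> w" "w \<le> q1 + q2"
  defines "P \<equiv> qH + (q1 + q2) * b"
  shows "0 \<le> qH * (1 - P) + w * (b - P)"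
proof -
  have "0 \<le> (q1 + q2) * b" "(q1 + q2) * b \<le> q1 + q2"
    using q b by (simp_all add: mult_left_le)
  then have P: "0 \<le> P" "P \<le> 1"
    using q unfolding P_def by linarith+
  have "(q1 + q2) * (qH * (1 - P) + w * (b - P))
          = (q1 + q2 - w) * qH * (1 - P) + w * (1 - qH - (q1 + q2)) * P"
    unfolding P_def by (simp add: algebra_simps)
  also have "\<dots> \<ge> 0"
    using q w P by (intro add_nonneg_nonneg mult_nonneg_nonneg) auto
  finally show ?thesis
    using q(2) by (simp add: zero_le_mult_iff)
qed

lemma max_gains_symmetric:
  fixes qH q1 q2 b i :: real
  assumes phi: "phi1 F R = b" "phi2 F R = b" and b: "0 < b" "b < 1"
    and q: "0 < qH" "0 < q1" "0 < q2" "qH + q1 + q2 < 1" and i: "-1/2 \<le> i" "i \<le> 1/2"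
  defines "P \<equiv> qH + (q1 + q2) * b"
  shows "max (UB F R qH q1 q2 i - U0 qH q1 q2 i) 0
           = (qH * (1 - P) + (q1 + q2) / 2 * (b - P)) / P + (q1 - q2) * (b - P) / P * i"
    and "max (UD F R qH q1 q2 i - U0 qH q1 q2 i) 0 = 0"
proof -
  define w where "w = (1/2 + i) * q1 + (1/2 - i) * q2"
  define G where "G = qH * (1 - P) + w * (b - P)"
  have "0 < (q1 + q2) * b" "(q1 + q2) * b < q1 + q2"
    using q b by simp_all
  then have P: "0 < P" "P < 1"
    using q unfolding P_def by linarith+
  have "0 \<le> (1/2 + i) * q1" "0 \<le> (1/2 - i) * q2" "0 \<le> (1/2 - i) * q1" "0 \<le> (1/2 + i) * q2"
    using i q by simp_all
  then have "0 \<le> w" "w \<le> q1 + q2"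
    unfolding w_def by (simp_all add: algebra_simps)
  then have "0 \<le> G"
    using gain_after_buy_nonneg[of qH q1 q2 b w] q b unfolding G_def P_def by simp
  moreover have UB_eq: "UB F R qH q1 q2 i - U0 qH q1 q2 i = G / P"
    and UD_eq: "UD F R qH q1 q2 i - U0 qH q1 q2 i = - G / (1 - P)"
    using UB_sub_U0[OF phi, of qH q1 q2 i] UD_sub_U0[OF phi, of qH q1 q2 i] P
    by (simp_all add: P_def[symmetric] G_def w_def)
  ultimately have "0 \<le> G / P" "- G / (1 - P) \<le> 0"
    using P by (simp_all add: divide_nonpos_pos)
  show "max (UB F R qH q1 q2 i - U0 qH q1 q2 i) 0
          = (qH * (1 - P) + (q1 + q2) / 2 * (b - P)) / P + (q1 - q2) * (b - P) / P * i"
    unfolding UB_eq max.absorb1[OF \<open>0 \<le> G / P\<close>] using P by (simp add: G_def w_def field_simps)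
  show "max (UD F R qH q1 q2 i - U0 qH q1 q2 i) 0 = 0"
    unfolding UD_eq using \<open>- G / (1 - P) \<le> 0\<close> by (rule max.absorb2)
qed

lemma rec_value_symmetric:
  assumes cdf: "type_cdf F" and sym: "\<forall>i. F (-i) = 1 - F i" and R: "0 < R" "R < 1"
    and q: "0 < qH" "0 < q1" "0 < q2" "qH + q1 + q2 < 1"
  defines "b \<equiv> phi2 F R"
  defines "P \<equiv> qH + (q1 + q2) * b"
  shows "rec_value F R qH q1 q2 = qH * (1 - P) + (q1 + q2) / 2 * (b - P)"
proof -
  have b: "0 < b" "b < 1"
    using phi2_bounds[OF cdf R] by (simp_all add: b_def)
  have phi: "phi1 F R = b" "phi2 F R = b"
    using phi1_eq_phi2[OF sym] by (simp_all add: b_def)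
  have "0 < (q1 + q2) * b"
    using q b by simp
  then have P: "0 < P"
    using q unfolding P_def by linarith
  define c\<^sub>0 where "c\<^sub>0 = qH * (1 - P) + (q1 + q2) / 2 * (b - P)"
  define c\<^sub>1 where "c\<^sub>1 = (q1 - q2) * (b - P)"
  note gains = max_gains_symmetric[OF phi b q, folded P_def, folded c\<^sub>0_def c\<^sub>1_def]
  have "piB F R qH q1 q2 = P" "piD F R qH q1 q2 = 1 - P"
    by (simp_all add: piD_def piB_def phi P_def algebra_simps)
  moreover have "intF F (\<lambda>i. max (UB F R qH q1 q2 i - U0 qH q1 q2 i) 0) = intF F (\<lambda>i. c\<^sub>0 / P + c\<^sub>1 / P * i)"
    using gains(1) by (rule intF_cong)
  moreover have "intF F (\<lambda>i. max (UD F R qH q1 q2 i - U0 qH q1 q2 i) 0) = intF F (\<lambda>i. 0)"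
    using gains(2) by (rule intF_cong)
  ultimately have "rec_value F R qH q1 q2 = P * intF F (\<lambda>i. c\<^sub>0 / P + c\<^sub>1 / P * i) + (1 - P) * intF F (\<lambda>i. 0)"
    unfolding rec_value_def by simp
  also have "\<dots> = c\<^sub>0"
    using P by (simp only: intF_affine[OF cdf sym]) (simp add: intF_def)
  finally show ?thesis
    by (simp add: c\<^sub>0_def)
qed

lemma rec_value_admissible:
  assumes cdf: "type_cdf F" and sym: "\<forall>i. F (-i) = 1 - F i" and R: "0 < R" "R < 1"
    and beta: "\<beta> = F (1/2 - R)" and sigma: "0 < \<sigma>" and adm: "admissible \<sigma> Q qH q1 q2"
  shows "rec_value F R qH q1 q2
           = (\<sigma> - (3*\<sigma> - \<beta> - \<sigma>^2 + \<sigma>^2*\<beta>) * Q + 2 * ((1 - \<sigma>) * (\<sigma> - \<beta> * (1 + \<sigma>))) * Q^2)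
             / (1 + \<sigma>)^2"
proof -
  from adm have Q: "0 < Q" "Q < 1/2" and q: "0 < q1" "0 < q2" "q1 + q2 = 2 * Q"
    and qH: "qH * (1 + \<sigma>) = (1 - 2 * Q) * \<sigma>"
    using sigma by (auto simp: admissible_def field_simps)
  have "0 < qH"
    using Q sigma adm by (simp add: admissible_def)
  moreover have "qH + q1 + q2 < 1"
  proof -
    have "qH * (1 + \<sigma>) < (1 - 2 * Q) * (1 + \<sigma>)"
      using qH Q by simp
    then show ?thesis
      using sigma q by simp
  qed
  ultimately have "rec_value F R qH q1 q2 = qH * (1 - (qH + 2 * Q * \<beta>)) + Q * (\<beta> - (qH + 2 * Q * \<beta>))"
    using rec_value_symmetric[OF cdf sym R _ q(1,2)] by (simp add: q(3) phi2_def beta)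
  also have "\<dots> = (\<sigma> - (3*\<sigma> - \<beta> - \<sigma>^2 + \<sigma>^2*\<beta>) * Q + 2 * ((1 - \<sigma>) * (\<sigma> - \<beta> * (1 + \<sigma>))) * Q^2)
                   / (1 + \<sigma>)^2"
  proof -
    have "(qH * (1 - (qH + 2 * Q * \<beta>)) + Q * (\<beta> - (qH + 2 * Q * \<beta>))) * (1 + \<sigma>)^2
            = \<sigma> - (3*\<sigma> - \<beta> - \<sigma>^2 + \<sigma>^2*\<beta>) * Q + 2 * ((1 - \<sigma>) * (\<sigma> - \<beta> * (1 + \<sigma>))) * Q^2"
      using qH by algebra
    then show ?thesis
      using sigma by (simp add: eq_divide_eq)
  qed
  finally show ?thesis .
qed

lemma quadratic_strict_antimono:
  fixes c k d x y :: real
  assumes k: "0 < k" "2 * d < k" and xy: "0 \<le> x" "x < y" "x + y \<le> 1"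
  shows "c - k * y + 2 * d * y^2 < c - k * x + 2 * d * x^2"
proof -
  have "0 < (1 - (x + y)) * k + (x + y) * (k - 2 * d)"
    using k xy by (intro add_nonneg_pos mult_nonneg_nonneg mult_pos_pos) auto
  then have "0 < (y - x) * (k - 2 * d * (x + y))"
    using xy by (intro mult_pos_pos) (auto simp: algebra_simps)
  then show ?thesis
    by (simp add: algebra_simps power2_eq_square)
qed

lemma quadratic_le_vertex:
  fixes c k d x :: real
  assumes "d < 0"
  shows "c - k * x + 2 * d * x^2 \<le> c - k * (k / (4 * d)) + 2 * d * (k / (4 * d))^2"
proof -
  have "c - k * (k / (4 * d)) + 2 * d * (k / (4 * d))^2 - (c - k * x + 2 * d * x^2)
          = - 2 * d * (x - k / (4 * d))^2"
    using assms by (simp add: field_simps power2_eq_square)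
  also have "\<dots> \<ge> 0"
    using assms by (simp add: mult_nonpos_nonneg)
  finally show ?thesis
    by simp
qed

lemma vertex_in_half_interval:
  fixes k d :: real
  assumes "k < 0" "2 * d < k"
  shows "0 < k / (4 * d)" "k / (4 * d) < 1/2"
  using assms by (simp_all add: divide_neg_neg divide_less_eq)

lemma value_slope_at_half_negative:
  fixes \<sigma> \<beta> :: real
  assumes "0 < \<sigma>" "0 \<le> \<beta>" "\<beta> \<le> 1"
  shows "2 * ((1 - \<sigma>) * (\<sigma> - \<beta> * (1 + \<sigma>))) < 3*\<sigma> - \<beta> - \<sigma>^2 + \<sigma>^2*\<beta>"
proof -
  have "3*\<sigma> - \<beta> - \<sigma>^2 + \<sigma>^2*\<beta> - 2 * ((1 - \<sigma>) * (\<sigma> - \<beta> * (1 + \<sigma>))) = \<sigma> + \<beta> + \<sigma>^2 * (1 - \<beta>)"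
    by (simp add: algebra_simps power2_eq_square)
  also have "\<dots> > 0"
    using assms by (intro add_pos_nonneg) auto
  finally show ?thesis
    by simp
qed

theorem corollary3:
  fixes F :: "real \<Rightarrow> real" and R \<sigma> \<beta> :: real
  assumes cdf: "type_cdf F"
    and sym: "\<forall>i. F (-i) = 1 - F i"
    and R: "0 < R" "R < 1"
    and beta: "\<beta> = F (1/2 - R)"
    and sigma: "\<sigma> > 0"
  shows
    "(3*\<sigma> - \<beta> - \<sigma>^2 + \<sigma>^2*\<beta> > 0 \<longrightarrow>
        (\<forall>Q Q' qH q1 q2 qH' q1' q2'. admissible \<sigma> Q qH q1 q2 \<and> admissible \<sigma> Q' qH' q1' q2' \<and> Q < Q'
           \<longrightarrow> rec_value F R qH' q1' q2' < rec_value F R qH q1 q2))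
     \<and> (\<sigma> = 1 \<longrightarrow> 3*\<sigma> - \<beta> - \<sigma>^2 + \<sigma>^2*\<beta> > 0)
     \<and> (3*\<sigma> - \<beta> - \<sigma>^2 + \<sigma>^2*\<beta> < 0 \<longrightarrow>
        (let Qs = (3*\<sigma> - \<beta> - \<sigma>^2 + \<sigma>^2*\<beta>) / (4*\<sigma> - 4*\<beta> - 4*\<sigma>^2 + 4*\<sigma>^2*\<beta>)
         in 0 < Qs \<and> Qs < 1/2 \<and>
            (\<forall>qH q1 q2 Q qH' q1' q2'. admissible \<sigma> Qs qH q1 q2 \<and> admissible \<sigma> Q qH' q1' q2'
               \<longrightarrow> rec_value F R qH' q1' q2' \<le> rec_value F R qH q1 q2)))"
proof -
  define K where "K = 3*\<sigma> - \<beta> - \<sigma>^2 + \<sigma>^2*\<beta>"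
  define D where "D = (1 - \<sigma>) * (\<sigma> - \<beta> * (1 + \<sigma>))"
  have "0 < \<beta>" "\<beta> < 1"
    using phi2_bounds[OF cdf R] by (simp_all add: phi2_def beta)
  then have slope: "2 * D < K"
    unfolding K_def D_def using sigma by (intro value_slope_at_half_negative) auto
  have value_eq: "rec_value F R qH q1 q2 = (\<sigma> - K * Q + 2 * D * Q^2) / (1 + \<sigma>)^2"
    if "admissible \<sigma> Q qH q1 q2" for Q qH q1 q2
    unfolding K_def D_def by (rule rec_value_admissible[OF cdf sym R beta sigma that])
  have den: "0 < (1 + \<sigma>)^2"
    using sigma by simp
  have decreasing: "rec_value F R qH' q1' q2' < rec_value F R qH q1 q2"
    if "0 < K" "admissible \<sigma> Q qH q1 q2" "admissible \<sigma> Q' qH' q1' q2'" "Q < Q'" for Q Q' qH q1 q2 qH' q1' q2'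
  proof -
    have "0 \<le> Q" "Q + Q' \<le> 1"
      using that by (auto simp: admissible_def)
    then have "\<sigma> - K * Q' + 2 * D * Q'^2 < \<sigma> - K * Q + 2 * D * Q^2"
      using quadratic_strict_antimono[OF \<open>0 < K\<close> slope _ \<open>Q < Q'\<close>] by blast
    then show ?thesis
      unfolding value_eq[OF that(2)] value_eq[OF that(3)] using den by (rule divide_strict_right_mono)
  qed
  have maximal: "rec_value F R qH' q1' q2' \<le> rec_value F R qH q1 q2"
    if "D < 0" "admissible \<sigma> (K / (4 * D)) qH q1 q2" "admissible \<sigma> Q qH' q1' q2'" for Q qH q1 q2 qH' q1' q2'
    unfolding value_eq[OF that(2)] value_eq[OF that(3)]
    using den by (intro divide_right_mono quadratic_le_vertex[OF \<open>D < 0\<close>]) simp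
  have vertex: "4*\<sigma> - 4*\<beta> - 4*\<sigma>^2 + 4*\<sigma>^2*\<beta> = 4 * D"
    by (simp add: D_def algebra_simps power2_eq_square)
  have "\<sigma> = 1 \<Longrightarrow> 0 < K"
    by (simp add: K_def)
  moreover have "K < 0 \<Longrightarrow> D < 0"
    using slope by linarith
  ultimately show ?thesis
    unfolding K_def[symmetric] vertex Let_def
    using decreasing maximal vertex_in_half_interval[OF _ slope] by blast
qed

end
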